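(* For every $p\in[0,1]$, \[ p \le \tfrac12\Big(1+\sqrt{1-h(p)^{\ln 4}}\Big), \] where $h(p) = p\log_2\frac1p + (1-p)\log_2\frac1{1-p}$ (with $0\log_2\frac10 = 0$). *)

theory Defs
  imports Complex_Main
begin

definition binary_entropy :: "real \<Rightarrow> real" where
  "binary_entropy p =
     (if p = 0 then 0 else p * log 2 (1 / p)) +
     (if 1 - p = 0 then 0 else (1 - p) * log 2 (1 / (1 - p)))"

end

theory Submission
  imports Defs "HOL-Real_Asymp.Real_Asymp"
begin

(* Put x = 2p - 1 and let H x be the natural entropy of the coin ((1 - x)/2, (1 + x)/2), so that
   h p = H x / ln 2 and 4p(1 - p) = 1 - x^2. It suffices that (H x / ln 2) powr ln 4 <= 1 - x^2 on
   [0,1), i.e. that phi x = ln (1 - x^2) - ln 4 ln (H x / ln 2) is nonnegative there. phi vanishes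
   at 0 and phi' has the sign of G x = ln 4 (1 - x^2) artanh x - 2 x H x, which tends to 0 at both
   ends of [0,1). A function vanishing at 0 whose derivative, once negative, stays nonpositive has
   the same property, and is nonnegative if it also tends to 0 at the right end. Starting from the
   decreasing derivative of (1 - x^2) G''/2 this propagates down to G' and gives G >= 0. *)

definition nonpos_after_neg_on :: "real set \<Rightarrow> (real \<Rightarrow> real) \<Rightarrow> bool" where
  "nonpos_after_neg_on S f \<longleftrightarrow> (\<forall>s\<in>S. \<forall>t\<in>S. s < t \<longrightarrow> f s < 0 \<longrightarrow> f t \<le> 0)"

lemma antimono_on_imp_nonpos_after_neg_on:
  "antimono_on S f \<Longrightarrow> nonpos_after_neg_on S f"
  unfolding nonpos_after_neg_on_def by (meson monotone_onD less_imp_le order_le_less_trans)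

lemma nonpos_after_neg_on_mult_pos:
  assumes "nonpos_after_neg_on S f" and "\<And>x. x \<in> S \<Longrightarrow> 0 < w x"
  shows "nonpos_after_neg_on S (\<lambda>x. w x * f x)"
  using assms unfolding nonpos_after_neg_on_def
  by (metis mult_le_0_iff mult_less_0_iff not_le order.asym)

lemma nonincreasing_after_neg:
  fixes g g' :: "real \<Rightarrow> real"
  assumes der: "\<And>x. a \<le> x \<Longrightarrow> x < b \<Longrightarrow> (g has_real_derivative g' x) (at x)"
    and "g a = 0" and g': "nonpos_after_neg_on {a<..<b} g'"
    and "a < s" "g s < 0" "s \<le> t" "t < b"
  shows "g t \<le> g s"
proof -
  obtain z where z: "a < z" "z < s" "g s - g a = (s - a) * g' z"
    using MVT2[of a s g g'] der assms by auto
  have "g' z < 0"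
    using z assms by (simp add: mult_less_0_iff)
  have "\<exists>y. (g has_real_derivative y) (at x) \<and> y \<le> 0" if "s \<le> x" "x \<le> t" for x
  proof -
    have "z \<in> {a<..<b}" "x \<in> {a<..<b}" "z < x"
      using z that assms by auto
    with \<open>g' z < 0\<close> g' have "g' x \<le> 0"
      unfolding nonpos_after_neg_on_def by blast
    moreover have "(g has_real_derivative g' x) (at x)"
      using der that assms by simp
    ultimately show ?thesis
      by blast
  qed
  then show ?thesis
    by (rule DERIV_nonpos_imp_nonincreasing[OF \<open>s \<le> t\<close>])
qed

lemma nonpos_after_neg_on_primitive:
  fixes g g' :: "real \<Rightarrow> real"
  assumes "\<And>x. a \<le> x \<Longrightarrow> x < b \<Longrightarrow> (g has_real_derivative g' x) (at x)"
    and "g a = 0" and "nonpos_after_neg_on {a<..<b} g'"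
  shows "nonpos_after_neg_on {a<..<b} g"
  unfolding nonpos_after_neg_on_def
proof (intro ballI impI)
  fix s t assume "s \<in> {a<..<b}" "t \<in> {a<..<b}" "s < t" "g s < 0"
  moreover from this have "g t \<le> g s"
    by (intro nonincreasing_after_neg[of a b g g'] assms) auto
  ultimately show "g t \<le> 0"
    by simp
qed

lemma nonneg_if_deriv_nonpos_after_neg:
  fixes g g' :: "real \<Rightarrow> real"
  assumes der: "\<And>x. a \<le> x \<Longrightarrow> x < b \<Longrightarrow> (g has_real_derivative g' x) (at x)"
    and "g a = 0" and "nonpos_after_neg_on {a<..<b} g'"
    and lim: "(g \<longlongrightarrow> 0) (at_left b)"
    and "a \<le> x" "x < b"
  shows "0 \<le> g x"
proof (rule ccontr)
  assume "\<not> 0 \<le> g x"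
  then have "a < x" "g x < 0"
    using assms by (auto simp: order.order_iff_strict)
  have "\<forall>\<^sub>F t in at_left b. g t \<le> g x"
    using eventually_at_left_real[OF \<open>x < b\<close>]
  proof eventually_elim
    case (elim t)
    with \<open>a < x\<close> \<open>g x < 0\<close> show ?case
      by (intro nonincreasing_after_neg[of a b g g'] assms) auto
  qed
  then have "0 \<le> g x"
    by (rule tendsto_upperbound[OF lim]) (simp add: trivial_limit_at_left_real)
  with \<open>g x < 0\<close> show False by simp
qed

lemma artanh_le_artanh:
  fixes x y :: real
  assumes "-1 < x" "x \<le> y" "y < 1"
  shows "artanh x \<le> artanh y"
proof -
  have "(1 + x) / (1 - x) \<le> (1 + y) / (1 - y)"
    using assms by (simp add: divide_simps) (simp add: algebra_simps)
  then show ?thesis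
    using assms by (simp add: artanh_def)
qed

lemma artanh_nonneg: "0 \<le> x \<Longrightarrow> x < 1 \<Longrightarrow> 0 \<le> artanh (x :: real)"
  using artanh_le_artanh[of 0 x] by simp

lemma ln_4_eq: "ln (4 :: real) = 2 * ln 2"
  using ln_realpow[of 2 2] by simp

lemma ln_4_less_2: "ln (4 :: real) < 2"
  using ln_2_less_1 by (simp add: ln_4_eq)

definition coin_entropy :: "real \<Rightarrow> real" where
  "coin_entropy x = - ((1 - x) / 2) * ln ((1 - x) / 2) - ((1 + x) / 2) * ln ((1 + x) / 2)"

lemma coin_entropy_0 [simp]: "coin_entropy 0 = ln 2"
  by (simp add: coin_entropy_def ln_div)

lemma coin_entropy_minus [simp]: "coin_entropy (- x) = coin_entropy x"
  by (simp add: coin_entropy_def algebra_simps)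

lemma coin_entropy_1 [simp]: "coin_entropy 1 = 0"
  by (simp add: coin_entropy_def)

lemma coin_entropy_pos:
  assumes "-1 < x" "x < 1"
  shows "0 < coin_entropy x"
proof -
  have "((1 - x) / 2) * ln ((1 - x) / 2) < 0" "((1 + x) / 2) * ln ((1 + x) / 2) < 0"
    using assms by (auto intro!: mult_pos_neg simp: ln_less_zero_iff)
  then show ?thesis
    by (simp add: coin_entropy_def)
qed

lemma coin_entropy_has_real_derivative:
  assumes "-1 < x" "x < 1"
  shows "(coin_entropy has_real_derivative - artanh x) (at x)"
proof -
  have halves: "(4 - 4 * x) / (2 - x * 2) = 2" "(4 + 4 * x) / (2 + x * 2) = 2"
    using assms by (simp_all add: field_simps)
  show ?thesis
    unfolding coin_entropy_def[abs_def]
    by (rule DERIV_cong, use assms in \<open>auto intro!: derivative_eq_intros\<close>)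
      (use assms halves in \<open>simp add: artanh_def ln_div algebra_simps, simp add: field_simps\<close>)
qed

lemma binary_entropy_eq_coin_entropy:
  assumes "0 \<le> p" "p \<le> 1"
  shows "binary_entropy p = coin_entropy (2 * p - 1) / ln 2"
proof -
  have halves: "(1 - (2 * p - 1)) / 2 = 1 - p" "(1 + (2 * p - 1)) / 2 = p"
    by simp_all
  show ?thesis
    using assms unfolding coin_entropy_def halves
    by (auto simp: binary_entropy_def log_def ln_div field_simps)
qed

(* The functions in this and the next lemma are (1 - x^2) G''/2 and G' for the function G
   defined in the proof of two_mult_coin_entropy_le. *)
lemma gap_deriv2_nonpos_after_neg:
  "nonpos_after_neg_on {0<..<1} (\<lambda>x. (2 - ln 4) * (1 - x\<^sup>2) * artanh x - (ln 4 - 1) * x)"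
proof (rule nonpos_after_neg_on_primitive
    [where g' = "\<lambda>x. (2 - ln 4) * (1 - 2 * x * artanh x) - (ln 4 - 1)"])
  fix x :: real
  assume x: "0 \<le> x" "x < 1"
  have sq: "x\<^sup>2 < 1"
    using x abs_square_less_1[of x] by auto
  show "((\<lambda>x. (2 - ln 4) * (1 - x\<^sup>2) * artanh x - (ln 4 - 1) * x) has_real_derivative
      (2 - ln 4) * (1 - 2 * x * artanh x) - (ln 4 - 1)) (at x)"
    by (rule DERIV_cong, use x in \<open>auto intro!: derivative_eq_intros\<close>)
      (use sq in \<open>simp add: field_simps, simp add: algebra_simps\<close>)
next
  have "x * artanh x \<le> y * artanh y" if "0 \<le> x" "x \<le> y" "y < 1" for x y :: real
    using that artanh_le_artanh[of x y] artanh_nonneg[of x] by (intro mult_mono) auto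
  then have "antimono_on {0<..<1} (\<lambda>x::real. (2 - ln 4) * (1 - 2 * x * artanh x) - (ln 4 - 1))"
    using ln_4_less_2 by (intro monotone_onI) (auto intro!: mult_left_mono)
  then show "nonpos_after_neg_on {0<..<1} (\<lambda>x. (2 - ln 4) * (1 - 2 * x * artanh x) - (ln 4 - 1))"
    by (rule antimono_on_imp_nonpos_after_neg_on)
qed simp

lemma gap_deriv_nonpos_after_neg:
  "nonpos_after_neg_on {0<..<1}
     (\<lambda>x. ln 4 - 2 * coin_entropy x - (2 * ln 4 - 2) * x * artanh x)"
proof (rule nonpos_after_neg_on_primitive[where g' =
    "\<lambda>x. 2 / (1 - x\<^sup>2) * ((2 - ln 4) * (1 - x\<^sup>2) * artanh x - (ln 4 - 1) * x)"])
  fix x :: real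
  assume x: "0 \<le> x" "x < 1"
  have sq: "x\<^sup>2 < 1"
    using x abs_square_less_1[of x] by auto
  show "((\<lambda>x. ln 4 - 2 * coin_entropy x - (2 * ln 4 - 2) * x * artanh x) has_real_derivative
      2 / (1 - x\<^sup>2) * ((2 - ln 4) * (1 - x\<^sup>2) * artanh x - (ln 4 - 1) * x)) (at x)"
    by (rule DERIV_cong, use x in \<open>auto intro!: derivative_eq_intros coin_entropy_has_real_derivative\<close>)
      (use sq in \<open>simp add: field_simps\<close>)
next
  show "nonpos_after_neg_on {0<..<1}
      (\<lambda>x. 2 / (1 - x\<^sup>2) * ((2 - ln 4) * (1 - x\<^sup>2) * artanh x - (ln 4 - 1) * x))"
    by (rule nonpos_after_neg_on_mult_pos[OF gap_deriv2_nonpos_after_neg]) (auto simp: abs_square_less_1)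
qed (simp add: ln_4_eq)

lemma two_mult_coin_entropy_le:
  assumes "0 \<le> x" "x < 1"
  shows "2 * x * coin_entropy x \<le> ln 4 * (1 - x\<^sup>2) * artanh x"
proof -
  define G :: "real \<Rightarrow> real"
    where "G = (\<lambda>x. ln 4 * (1 - x\<^sup>2) * artanh x - 2 * x * coin_entropy x)"
  have "0 \<le> G x"
  proof (rule nonneg_if_deriv_nonpos_after_neg[of 0 1 G, OF _ _ gap_deriv_nonpos_after_neg])
    fix x :: real
    assume x: "0 \<le> x" "x < 1"
    have sq: "x\<^sup>2 < 1"
      using x abs_square_less_1[of x] by auto
    show "(G has_real_derivative
        ln 4 - 2 * coin_entropy x - (2 * ln 4 - 2) * x * artanh x) (at x)"
      unfolding G_def
      by (rule DERIV_cong, use x in \<open>auto intro!: derivative_eq_intros coin_entropy_has_real_derivative\<close>)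
        (use sq in \<open>simp add: field_simps, simp add: algebra_simps\<close>)
  next
    show "(G \<longlongrightarrow> 0) (at_left 1)"
      unfolding G_def coin_entropy_def artanh_def by real_asymp
  qed (use assms in \<open>simp_all add: G_def\<close>)
  then show ?thesis
    by (simp add: G_def)
qed

lemma ln_coin_entropy_le:
  assumes "0 \<le> x" "x < 1"
  shows "ln 4 * ln (coin_entropy x / ln 2) \<le> ln (1 - x\<^sup>2)"
proof -
  define phi :: "real \<Rightarrow> real"
    where "phi = (\<lambda>x. ln (1 - x\<^sup>2) - ln 4 * ln (coin_entropy x / ln 2))"
  have "phi 0 \<le> phi x"
  proof (rule DERIV_nonneg_imp_nondecreasing[OF \<open>0 \<le> x\<close>])
    fix y :: real
    assume "0 \<le> y" "y \<le> x"
    then have y: "0 \<le> y" "y < 1"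
      using assms by auto
    have sq: "y\<^sup>2 < 1"
      using y abs_square_less_1[of y] by auto
    have pos: "0 < coin_entropy y"
      using y by (intro coin_entropy_pos) auto
    have "(phi has_real_derivative ln 4 * artanh y / coin_entropy y - 2 * y / (1 - y\<^sup>2)) (at y)"
      unfolding phi_def
      by (rule DERIV_cong, use y sq pos in \<open>auto intro!: derivative_eq_intros coin_entropy_has_real_derivative\<close>)
    moreover have "2 * y / (1 - y\<^sup>2) \<le> ln 4 * artanh y / coin_entropy y"
      using two_mult_coin_entropy_le[OF y] sq pos by (simp add: divide_simps ac_simps)
    ultimately show "\<exists>d. (phi has_real_derivative d) (at y) \<and> 0 \<le> d"
      by force
  qed
  then show ?thesis
    by (simp add: phi_def)
qed

lemma coin_entropy_powr_ln_4_le: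
  assumes "\<bar>x\<bar> \<le> 1"
  shows "(coin_entropy x / ln 2) powr ln 4 \<le> 1 - x\<^sup>2"
proof -
  have even: "coin_entropy x = coin_entropy \<bar>x\<bar>" "x\<^sup>2 = \<bar>x\<bar>\<^sup>2"
    by (cases "0 \<le> x"; simp)+
  consider "\<bar>x\<bar> = 1" | "\<bar>x\<bar> < 1"
    using assms by linarith
  then show ?thesis
  proof cases
    case 1
    then show ?thesis
      unfolding even by simp
  next
    case 2
    have "0 < coin_entropy \<bar>x\<bar>" "\<bar>x\<bar>\<^sup>2 < 1"
      using 2 by (auto intro: coin_entropy_pos simp: abs_square_less_1)
    then have "(coin_entropy \<bar>x\<bar> / ln 2) powr ln 4 = exp (ln 4 * ln (coin_entropy \<bar>x\<bar> / ln 2))"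
      by (simp add: powr_def)
    also have "\<dots> \<le> exp (ln (1 - \<bar>x\<bar>\<^sup>2))"
      using ln_coin_entropy_le[of "\<bar>x\<bar>"] 2 by simp
    also have "\<dots> = 1 - \<bar>x\<bar>\<^sup>2"
      using \<open>\<bar>x\<bar>\<^sup>2 < 1\<close> by simp
    finally show ?thesis
      unfolding even .
  qed
qed

theorem lemma2:
  fixes p :: real
  assumes "0 \<le> p" and "p \<le> 1"
  shows "p \<le> (1 + sqrt (1 - binary_entropy p powr ln 4)) / 2"
proof -
  have "binary_entropy p powr ln 4 \<le> 1 - (2 * p - 1)\<^sup>2"
    using coin_entropy_powr_ln_4_le[of "2 * p - 1"] binary_entropy_eq_coin_entropy[OF assms] assms
    by simp
  then have "2 * p - 1 \<le> sqrt (1 - binary_entropy p powr ln 4)"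
    by (intro real_le_rsqrt) simp
  then show ?thesis
    by simp
qed

end
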